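(* Let $E$ be a finite-dimensional real Euclidean space with inner product $\langle\cdot,\cdot\rangle$, let $\|\cdot\|_{(1)},\dots,\|\cdot\|_{(n)}$ be norms on $E$, and let $\alpha_1,\dots,\alpha_n\ge 0$, not all zero. For each $i$ let $\mathrm{LMO}_i$ be a linear minimization oracle for the unit ball of $\|\cdot\|_{(i)}$, i.e. $\mathrm{LMO}_i(\mathbf{M})\in\arg\min_{\|\mathbf{D}\|_{(i)}\le 1}\langle\mathbf{M},\mathbf{D}\rangle$ for every $\mathbf{M}\in E$. Let $\|\cdot\|$ be the norm dual to the norm $\sum_{i=1}^n\alpha_i\|\cdot\|_{(i)}^\dagger$. Then for every $\mathbf{M}\in E$, $$\sum_{i=1}^n\alpha_i\,\mathrm{LMO}_i(\mathbf{M})\in\arg\min_{\|\mathbf{D}\|\le 1}\langle\mathbf{M},\mathbf{D}\rangle,$$ i.e. $\sum_{i=1}^n\alpha_i\mathrm{LMO}_i$ is a linear minimization oracle for the unit ball of $\|\cdot\|$.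
   Context: For a norm $\|\cdot\|$ on $E$, its dual norm is $\|\mathbf{M}\|^\dagger=\sup_{\|\mathbf{D}\|\le1}\langle\mathbf{M},\mathbf{D}\rangle$. *)

theory Defs
  imports "HOL-Analysis.Analysis"
begin

definition is_norm :: "('a::real_vector \<Rightarrow> real) \<Rightarrow> bool" where
  "is_norm N \<longleftrightarrow>
     (\<forall>x. 0 \<le> N x) \<and> (\<forall>x. N x = 0 \<longleftrightarrow> x = 0) \<and>
     (\<forall>c x. N (scaleR c x) = \<bar>c\<bar> * N x) \<and>
     (\<forall>x y. N (x + y) \<le> N x + N y)"

definition dual_norm :: "('a::real_inner \<Rightarrow> real) \<Rightarrow> 'a \<Rightarrow> real" where
  "dual_norm N M = (SUP D\<in>{D. N D \<le> 1}. inner M D)"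

definition is_argmin_ball :: "('a::real_inner \<Rightarrow> real) \<Rightarrow> 'a \<Rightarrow> 'a \<Rightarrow> bool" where
  "is_argmin_ball N M X \<longleftrightarrow> N X \<le> 1 \<and> (\<forall>D. N D \<le> 1 \<longrightarrow> inner M X \<le> inner M D)"

end

theory Submission
  imports Defs
begin

text \<open>
  Write \<open>P = \<Sum>\<^sub>i \<alpha>\<^sub>i \<parallel>\<cdot>\<parallel>\<^sub>i\<^sup>\<dagger>\<close>. The oracle value \<open>LMO\<^sub>i(-Y)\<close> attains the supremum defining
  \<open>\<parallel>Y\<parallel>\<^sub>i\<^sup>\<dagger>\<close>, so \<open>Z = \<Sum>\<^sub>i \<alpha>\<^sub>i LMO\<^sub>i(M)\<close> satisfies \<open>\<langle>Z, X\<rangle> \<le> P(X)\<close> for all \<open>X\<close>, which puts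
  \<open>Z\<close> in the unit ball of \<open>P\<^sup>\<dagger>\<close>, and \<open>\<langle>M, Z\<rangle> = -P(-M)\<close>. By the Hoelder inequality
  \<open>\<langle>D, -M\<rangle> \<le> P(-M) P\<^sup>\<dagger>(D)\<close> for the norm \<open>P\<close>, the value \<open>-P(-M)\<close> is a lower bound of
  \<open>\<langle>M, D\<rangle>\<close> on that ball. The oracles also stand in for the compactness of the unit balls:
  they make every linear functional bounded above on them, so all suprema involved are finite.
\<close>

definition has_lmo :: "('a::real_inner \<Rightarrow> real) \<Rightarrow> bool" where
  "has_lmo N \<longleftrightarrow> (\<forall>M. \<exists>X. is_argmin_ball N M X)"

lemma is_norm_zero: "is_norm N \<Longrightarrow> N 0 = 0"
  unfolding is_norm_def by auto

lemma dual_norm_eq_inner_argmin: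
  assumes "is_argmin_ball N (- Y) X"
  shows "dual_norm N Y = inner Y X"
  unfolding dual_norm_def
  by (rule cSup_eq_maximum) (use assms in \<open>auto simp: is_argmin_ball_def\<close>)

lemma inner_le_dual_norm:
  assumes "has_lmo N" "N D \<le> 1"
  shows "inner Y D \<le> dual_norm N Y"
proof -
  obtain X where X: "is_argmin_ball N (- Y) X"
    using assms(1) unfolding has_lmo_def by blast
  then have "inner Y D \<le> inner Y X"
    using assms(2) unfolding is_argmin_ball_def by fastforce
  with X show ?thesis by (simp add: dual_norm_eq_inner_argmin)
qed

lemma bdd_above_inner_ball:
  "has_lmo N \<Longrightarrow> bdd_above (inner Y ` {D. N D \<le> 1})"
  by (rule bdd_aboveI2) (auto intro: inner_le_dual_norm)

lemma dual_norm_leI: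
  assumes "is_norm N" "\<And>D. N D \<le> 1 \<Longrightarrow> inner Y D \<le> c"
  shows "dual_norm N Y \<le> c"
proof -
  have "0 \<in> {D. N D \<le> 1}"
    using is_norm_zero[OF assms(1)] by simp
  then have "{D. N D \<le> 1} \<noteq> {}"
    by blast
  then show ?thesis
    unfolding dual_norm_def by (rule cSUP_least) (simp add: assms(2))
qed

lemma inner_le_norm_mult_dual_norm:
  assumes "is_norm P" "bdd_above (inner D ` {X. P X \<le> 1})"
  shows "inner D Y \<le> P Y * dual_norm P D"
proof (cases "Y = 0")
  case True
  then show ?thesis using is_norm_zero[OF assms(1)] by simp
next
  case False
  then have pos: "P Y > 0"
    using assms(1) unfolding is_norm_def by (metis order_le_less)
  have "P ((1 / P Y) *\<^sub>R Y) = 1"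
    using assms(1) pos False unfolding is_norm_def by simp
  then have "inner D ((1 / P Y) *\<^sub>R Y) \<le> dual_norm P D"
    unfolding dual_norm_def by (intro cSUP_upper assms(2)) simp
  with pos show ?thesis by (simp add: divide_le_eq mult.commute)
qed

lemma is_norm_dual_norm:
  assumes "is_norm N" "has_lmo N"
  shows "is_norm (dual_norm N)"
  unfolding is_norm_def
proof (intro conjI allI)
  have upper: "\<And>Y D. N D \<le> 1 \<Longrightarrow> inner Y D \<le> dual_norm N Y"
    using assms(2) by (rule inner_le_dual_norm)
  show nonneg: "0 \<le> dual_norm N Y" for Y
    using upper[of 0 Y] is_norm_zero[OF assms(1)] by simp
  have zero: "dual_norm N 0 = 0"
    using dual_norm_leI[OF assms(1), of 0 0] nonneg[of 0] by simp
  show "dual_norm N Y = 0 \<longleftrightarrow> Y = 0" for Y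
  proof
    assume "dual_norm N Y = 0"
    then have "inner Y Y \<le> 0"
      using inner_le_norm_mult_dual_norm[OF assms(1) bdd_above_inner_ball[OF assms(2)], of Y Y]
      by simp
    then show "Y = 0" by (metis inner_ge_zero inner_eq_zero_iff order_antisym)
  qed (simp add: zero)
  have scale_le: "dual_norm N (c *\<^sub>R Y) \<le> \<bar>c\<bar> * dual_norm N Y" for c Y
  proof (rule dual_norm_leI[OF assms(1)])
    fix D assume "N D \<le> 1"
    then have "N (sgn c *\<^sub>R D) \<le> 1"
      using assms(1) unfolding is_norm_def by (simp add: abs_sgn_eq)
    then have "inner Y (sgn c *\<^sub>R D) \<le> dual_norm N Y"
      by (rule upper)
    then have "\<bar>c\<bar> * inner Y (sgn c *\<^sub>R D) \<le> \<bar>c\<bar> * dual_norm N Y"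
      by (rule mult_left_mono) simp
    then show "inner (c *\<^sub>R Y) D \<le> \<bar>c\<bar> * dual_norm N Y"
      by (simp add: abs_mult_sgn mult.assoc[symmetric])
  qed
  show "dual_norm N (c *\<^sub>R Y) = \<bar>c\<bar> * dual_norm N Y" for c Y
  proof (cases "c = 0")
    case False
    have "dual_norm N Y \<le> \<bar>1 / c\<bar> * dual_norm N (c *\<^sub>R Y)"
      using scale_le[of "1 / c" "c *\<^sub>R Y"] False by simp
    with scale_le[of c Y] False show ?thesis
      by (simp add: field_simps)
  qed (simp add: zero)
  show "dual_norm N (Y + Z) \<le> dual_norm N Y + dual_norm N Z" for Y Z
    by (rule dual_norm_leI[OF assms(1)]) (auto simp: inner_add_left intro: add_mono upper)
qed

lemma is_norm_weighted_sum:
  assumes "finite I" "\<And>i. i \<in> I \<Longrightarrow> is_norm (N i)" "\<And>i. i \<in> I \<Longrightarrow> 0 \<le> \<alpha> i"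
    and "\<exists>j\<in>I. \<alpha> j \<noteq> 0"
  shows "is_norm (\<lambda>x. \<Sum>i\<in>I. \<alpha> i * N i x)"
  unfolding is_norm_def
proof (intro conjI allI)
  have N_nonneg: "\<And>i x. i \<in> I \<Longrightarrow> 0 \<le> N i x"
    and N_eq_0: "\<And>i x. i \<in> I \<Longrightarrow> N i x = 0 \<longleftrightarrow> x = 0"
    and N_scale: "\<And>i c x. i \<in> I \<Longrightarrow> N i (c *\<^sub>R x) = \<bar>c\<bar> * N i x"
    and N_triangle: "\<And>i x y. i \<in> I \<Longrightarrow> N i (x + y) \<le> N i x + N i y"
    using assms(2) unfolding is_norm_def by blast+
  have terms_nonneg: "\<And>i x. i \<in> I \<Longrightarrow> 0 \<le> \<alpha> i * N i x"
    using assms(3) N_nonneg by simp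
  show "0 \<le> (\<Sum>i\<in>I. \<alpha> i * N i x)" for x
    by (rule sum_nonneg) (rule terms_nonneg)
  show "(\<Sum>i\<in>I. \<alpha> i * N i x) = 0 \<longleftrightarrow> x = 0" for x
  proof
    assume "(\<Sum>i\<in>I. \<alpha> i * N i x) = 0"
    then have "\<forall>i\<in>I. \<alpha> i * N i x = 0"
      by (simp add: sum_nonneg_eq_0_iff[OF assms(1) terms_nonneg])
    moreover obtain j where "j \<in> I" "\<alpha> j \<noteq> 0"
      using assms(4) by blast
    ultimately have "N j x = 0"
      by auto
    with \<open>j \<in> I\<close> N_eq_0 show "x = 0"
      by blast
  qed (auto intro!: sum.neutral simp: N_eq_0)
  show "(\<Sum>i\<in>I. \<alpha> i * N i (c *\<^sub>R x)) = \<bar>c\<bar> * (\<Sum>i\<in>I. \<alpha> i * N i x)" for c x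
    unfolding sum_distrib_left by (rule sum.cong) (simp_all add: N_scale)
  show "(\<Sum>i\<in>I. \<alpha> i * N i (x + y)) \<le> (\<Sum>i\<in>I. \<alpha> i * N i x) + (\<Sum>i\<in>I. \<alpha> i * N i y)" for x y
    unfolding sum.distrib[symmetric] distrib_left[symmetric]
    by (rule sum_mono) (simp add: N_triangle assms(3) mult_left_mono)
qed

lemma bdd_above_inner_ball_if_dominates_dual_norm:
  assumes "is_norm N" "has_lmo N" "c > 0" "\<And>X. c * dual_norm N X \<le> P X"
  shows "bdd_above (inner D ` {X. P X \<le> 1})"
proof (rule bdd_aboveI2)
  fix X assume "X \<in> {X. P X \<le> 1}"
  then have "dual_norm N X \<le> 1 / c"
    using assms(3) assms(4)[of X] by (simp add: le_divide_eq mult.commute)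
  moreover have "0 \<le> N D"
    using assms(1) unfolding is_norm_def by blast
  ultimately have "N D * dual_norm N X \<le> N D * (1 / c)"
    by (rule mult_left_mono)
  moreover have "inner X D \<le> N D * dual_norm N X"
    by (rule inner_le_norm_mult_dual_norm[OF assms(1) bdd_above_inner_ball[OF assms(2)]])
  ultimately show "inner D X \<le> N D * (1 / c)"
    by (simp add: inner_commute)
qed

lemma bdd_above_inner_ball_weighted_sum_dual_norm:
  assumes "finite I" "\<And>i. i \<in> I \<Longrightarrow> is_norm (N i)" "\<And>i. i \<in> I \<Longrightarrow> has_lmo (N i)"
    and "\<And>i. i \<in> I \<Longrightarrow> 0 \<le> \<alpha> i" "\<exists>j\<in>I. \<alpha> j \<noteq> 0"
  shows "bdd_above (inner D ` {X. (\<Sum>i\<in>I. \<alpha> i * dual_norm (N i) X) \<le> 1})"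
proof -
  obtain j where j: "j \<in> I" "\<alpha> j > 0"
    using assms(4,5) by (metis order_le_less)
  have "0 \<le> \<alpha> i * dual_norm (N i) X" if "i \<in> I" for i X
    using assms(4)[OF that] is_norm_dual_norm[OF assms(2,3)[OF that]]
    unfolding is_norm_def by simp
  then have "\<alpha> j * dual_norm (N j) X \<le> (\<Sum>i\<in>I. \<alpha> i * dual_norm (N i) X)" for X
    by (intro member_le_sum j(1) assms(1)) auto
  then show ?thesis
    by (rule bdd_above_inner_ball_if_dominates_dual_norm[OF assms(2,3)[OF j(1)] j(2)])
qed

lemma is_argmin_ball_dual_normI:
  assumes "is_norm P" "\<And>D. bdd_above (inner D ` {X. P X \<le> 1})"
    and "\<And>X. inner Z X \<le> P X" "inner M Z = - P (- M)"
  shows "is_argmin_ball (dual_norm P) M Z"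
  unfolding is_argmin_ball_def
proof (intro conjI allI impI)
  show "dual_norm P Z \<le> 1"
    by (rule dual_norm_leI[OF assms(1)]) (use assms(3) in \<open>auto intro: order_trans\<close>)
  fix D assume "dual_norm P D \<le> 1"
  moreover have "0 \<le> P (- M)"
    using assms(1) unfolding is_norm_def by blast
  ultimately have "P (- M) * dual_norm P D \<le> P (- M)"
    by (simp add: mult_left_le)
  moreover have "inner D (- M) \<le> P (- M) * dual_norm P D"
    by (rule inner_le_norm_mult_dual_norm[OF assms(1,2)])
  ultimately show "inner M Z \<le> inner M D"
    using assms(4) by (simp add: inner_commute)
qed

theorem lemma4:
  fixes n :: nat
    and N :: "nat \<Rightarrow> 'a::euclidean_space \<Rightarrow> real"
    and \<alpha> :: "nat \<Rightarrow> real"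
    and LMO :: "nat \<Rightarrow> 'a \<Rightarrow> 'a"
    and M :: 'a
  assumes norms: "\<And>i. i \<in> {1..n} \<Longrightarrow> is_norm (N i)"
    and nonneg: "\<And>i. i \<in> {1..n} \<Longrightarrow> 0 \<le> \<alpha> i"
    and not_all_zero: "\<exists>i\<in>{1..n}. \<alpha> i \<noteq> 0"
    and lmo: "\<And>i M'. i \<in> {1..n} \<Longrightarrow> is_argmin_ball (N i) M' (LMO i M')"
  shows "is_argmin_ball
           (dual_norm (\<lambda>X. \<Sum>i=1..n. \<alpha> i * dual_norm (N i) X))
           M (\<Sum>i=1..n. \<alpha> i *\<^sub>R LMO i M)"
proof -
  define P where "P = (\<lambda>X. \<Sum>i=1..n. \<alpha> i * dual_norm (N i) X)"
  have has_lmo: "has_lmo (N i)" if "i \<in> {1..n}" for i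
    using lmo[OF that] unfolding has_lmo_def by blast
  have "is_norm P"
    unfolding P_def
    by (rule is_norm_weighted_sum) (use norms has_lmo is_norm_dual_norm nonneg not_all_zero in auto)
  moreover have "bdd_above (inner D ` {X. P X \<le> 1})" for D
    unfolding P_def
    by (rule bdd_above_inner_ball_weighted_sum_dual_norm) (use norms has_lmo nonneg not_all_zero in auto)
  moreover have "inner (\<Sum>i=1..n. \<alpha> i *\<^sub>R LMO i M) X \<le> P X" for X
  proof -
    have "inner (LMO i M) X \<le> dual_norm (N i) X" if "i \<in> {1..n}" for i
      using inner_le_dual_norm[OF has_lmo[OF that], of "LMO i M" X] lmo[OF that, of M]
      by (simp add: is_argmin_ball_def inner_commute)
    then show ?thesis
      unfolding P_def inner_sum_left inner_scaleR_left
      by (intro sum_mono mult_left_mono) (simp_all add: nonneg)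
  qed
  moreover have "inner M (\<Sum>i=1..n. \<alpha> i *\<^sub>R LMO i M) = - P (- M)"
  proof -
    have "dual_norm (N i) (- M) = - inner M (LMO i M)" if "i \<in> {1..n}" for i
      using dual_norm_eq_inner_argmin[of "N i" "- M" "LMO i M"] lmo[OF that, of M] by simp
    then show ?thesis
      unfolding P_def inner_sum_right inner_scaleR_right sum_negf[symmetric]
      by (intro sum.cong) simp_all
  qed
  ultimately show ?thesis
    unfolding P_def by (rule is_argmin_ball_dual_normI)
qed

end
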